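(* Let $t,b,k$ be positive integers with $4\le k\le t$ and $\ell=bk/(t(t-1))$ an integer, and let $d^*$ be a circular design neighbor-balanced at distances 1 and 2 in $\Omega_{(t,b,k)}$. Then under model $(\mathcal{M}2)$ the information matrix for the total effects $\psi=\tau+\lambda+\rho$ is $$C_{d^*}[\psi]=\frac{b(k-3)}{3(t-1)}\,Q_t,\qquad Q_t=I_t-t^{-1}J_t.$$
   Context: Designs: $t$ treatments, $b$ linear blocks; block $i$ has inner plots $j=1,\dots,k$ and border plots $j=0,k+1$; $d(i,j)$ is the treatment on plot $(i,j)$; circular means $d(i,0)=d(i,k)$, $d(i,k+1)=d(i,1)$. $\Omega_{(t,b,k)}$ is the set of circular designs with $t$ treatments and $b$ blocks of length $k$. $J_t$ is the $t\times t$ all-ones matrix. Model $(\mathcal{M}2)$: responses $Y_{i,j}$ ($1\le i\le b$, $1\le j\le k$) uncorrelated with common variance, $\mathbb{E}(Y_{i,j})=\beta_i+\tau_{d(i,j)}+\lambda_{d(i,j-1)}+\rho_{d(i,j+1)}$, i.e. $\mathbb{E}(Y)=B\beta+T_d\tau+L_d\lambda+R_d\rho$ with $B$ block incidence and $T_d,L_d,R_d$ ($bk\times t$) having a single $1$ in row $(i,j)$ at column $d(i,j)$, $d(i,j-1)$, $d(i,j+1)$ respectively. $\psi=K'\alpha$ with $\alpha=(\tau',\lambda',\rho')'$, $K=\mathbf 1_3\otimes I_t$. Information matrix: with $A=(T_d\mid L_d\mid R_d)$, $X^+$ the Moore–Penrose inverse, $\mathrm{pr}_{(X)}=X(X'X)^+X'$,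 $\mathrm{pr}^\perp_{(X)}=I-\mathrm{pr}_{(X)}$, $M=I-K(K'K)^+K'$, $X_1=AK(K'K)^+$, $X_2=(AM\mid B)$: $C_d[\psi]=X_1'\mathrm{pr}^\perp_{(X_2)}X_1$. CNBD: a design in $\Omega_{(t,b,k)}$ that is binary (each treatment at most once among the inner plots of each block), a balanced block design (equal replication and each unordered pair of distinct treatments together in the same number of blocks), and such that for each ordered pair $(a,c)$ of distinct treatments exactly $\ell$ inner plots $(i,j)$ have $d(i,j)=a$, $d(i,j+1)=c$. A CNBD2 (circular design neighbor-balanced at distances 1 and 2) is a CNBD such that moreover for each ordered pair $(a,c)$ of distinct treatments exactly $\ell$ inner plots $(i,j)$ have $d(i,j-1)=a$ and $d(i,j+1)=c$. *)

theory Defs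
  imports Complex_Main "Jordan_Normal_Form.Matrix"
begin

text \<open>Treatments are 0..t-1, blocks 0..b-1, inner plots of a block 0..k-1 (0-indexed).
  A design is d :: nat => nat => nat, d i j being the treatment on inner plot j of block i.
  Circularity: the left border plot of block i carries d i (k-1) and the right border
  plot carries d i 0, so the left neighbour of inner plot j is plot (j+k-1) mod k and
  the right neighbour is plot (j+1) mod k.\<close>

definition lnb :: "nat \<Rightarrow> nat \<Rightarrow> nat" where
  "lnb k j = (j + k - 1) mod k"

definition rnb :: "nat \<Rightarrow> nat \<Rightarrow> nat" where
  "rnb k j = (j + 1) mod k"

definition circ_design :: "nat \<Rightarrow> nat \<Rightarrow> nat \<Rightarrow> (nat \<Rightarrow> nat \<Rightarrow> nat) \<Rightarrow> bool" where
  "circ_design t b k d \<longleftrightarrow> (\<forall>i<b. \<forall>j<k. d i j < t)"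

definition binary_design :: "nat \<Rightarrow> nat \<Rightarrow> (nat \<Rightarrow> nat \<Rightarrow> nat) \<Rightarrow> bool" where
  "binary_design b k d \<longleftrightarrow> (\<forall>i<b. inj_on (d i) {..<k})"

definition balanced_block_design :: "nat \<Rightarrow> nat \<Rightarrow> nat \<Rightarrow> (nat \<Rightarrow> nat \<Rightarrow> nat) \<Rightarrow> bool" where
  "balanced_block_design t b k d \<longleftrightarrow>
     (\<exists>r. \<forall>a<t. card {(i, j). i < b \<and> j < k \<and> d i j = a} = r) \<and>
     (\<exists>lam. \<forall>a<t. \<forall>c<t. a \<noteq> c \<longrightarrow>
        card {i. i < b \<and> a \<in> d i ` {..<k} \<and> c \<in> d i ` {..<k}} = lam)"

definition CNBD :: "nat \<Rightarrow> nat \<Rightarrow> nat \<Rightarrow> nat \<Rightarrow> (nat \<Rightarrow> nat \<Rightarrow> nat) \<Rightarrow> bool" where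
  "CNBD t b k l d \<longleftrightarrow> circ_design t b k d \<and> binary_design b k d \<and>
     balanced_block_design t b k d \<and>
     (\<forall>a<t. \<forall>c<t. a \<noteq> c \<longrightarrow>
        card {(i, j). i < b \<and> j < k \<and> d i j = a \<and> d i (rnb k j) = c} = l)"

definition CNBD2 :: "nat \<Rightarrow> nat \<Rightarrow> nat \<Rightarrow> nat \<Rightarrow> (nat \<Rightarrow> nat \<Rightarrow> nat) \<Rightarrow> bool" where
  "CNBD2 t b k l d \<longleftrightarrow> CNBD t b k l d \<and>
     (\<forall>a<t. \<forall>c<t. a \<noteq> c \<longrightarrow>
        card {(i, j). i < b \<and> j < k \<and> d i (lnb k j) = a \<and> d i (rnb k j) = c} = l)"

definition mp_inverse :: "real mat \<Rightarrow> real mat" where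
  "mp_inverse A = (THE X. X \<in> carrier_mat (dim_col A) (dim_row A) \<and>
      A * X * A = A \<and> X * A * X = X \<and>
      transpose_mat (A * X) = A * X \<and> transpose_mat (X * A) = X * A)"

definition proj_mat :: "real mat \<Rightarrow> real mat" where
  "proj_mat X = X * mp_inverse (transpose_mat X * X) * transpose_mat X"

definition proj_perp :: "real mat \<Rightarrow> real mat" where
  "proj_perp X = 1\<^sub>m (dim_row X) - proj_mat X"

definition hcat :: "real mat \<Rightarrow> real mat \<Rightarrow> real mat" where
  "hcat X Y = mat (dim_row X) (dim_col X + dim_col Y)
     (\<lambda>(r, c). if c < dim_col X then X $$ (r, c) else Y $$ (r, c - dim_col X))"

text \<open>Rows are indexed by plots: plot (i,j) is row i*k+j.\<close>
definition T_mat :: "nat \<Rightarrow> nat \<Rightarrow> nat \<Rightarrow> (nat \<Rightarrow> nat \<Rightarrow> nat) \<Rightarrow> real mat" where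
  "T_mat t b k d = mat (b * k) t (\<lambda>(r, c). if d (r div k) (r mod k) = c then 1 else 0)"

definition L_mat :: "nat \<Rightarrow> nat \<Rightarrow> nat \<Rightarrow> (nat \<Rightarrow> nat \<Rightarrow> nat) \<Rightarrow> real mat" where
  "L_mat t b k d = mat (b * k) t (\<lambda>(r, c). if d (r div k) (lnb k (r mod k)) = c then 1 else 0)"

definition R_mat :: "nat \<Rightarrow> nat \<Rightarrow> nat \<Rightarrow> (nat \<Rightarrow> nat \<Rightarrow> nat) \<Rightarrow> real mat" where
  "R_mat t b k d = mat (b * k) t (\<lambda>(r, c). if d (r div k) (rnb k (r mod k)) = c then 1 else 0)"

definition B_mat :: "nat \<Rightarrow> nat \<Rightarrow> real mat" where
  "B_mat b k = mat (b * k) b (\<lambda>(r, c). if r div k = c then 1 else 0)"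

text \<open>K = 1_3 (Kronecker) I_t.\<close>
definition K_mat :: "nat \<Rightarrow> real mat" where
  "K_mat t = mat (3 * t) t (\<lambda>(r, c). if r mod t = c then 1 else 0)"

definition A_mat :: "nat \<Rightarrow> nat \<Rightarrow> nat \<Rightarrow> (nat \<Rightarrow> nat \<Rightarrow> nat) \<Rightarrow> real mat" where
  "A_mat t b k d = hcat (T_mat t b k d) (hcat (L_mat t b k d) (R_mat t b k d))"

definition M_mat :: "nat \<Rightarrow> real mat" where
  "M_mat t = 1\<^sub>m (3 * t) - K_mat t * mp_inverse (transpose_mat (K_mat t) * K_mat t) * transpose_mat (K_mat t)"

text \<open>Information matrix for psi = K' alpha under model (M2).\<close>
definition info_mat :: "nat \<Rightarrow> nat \<Rightarrow> nat \<Rightarrow> (nat \<Rightarrow> nat \<Rightarrow> nat) \<Rightarrow> real mat" where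
  "info_mat t b k d =
    (let A = A_mat t b k d; K = K_mat t;
         X1 = A * K * mp_inverse (transpose_mat K * K);
         X2 = hcat (A * M_mat t) (B_mat b k)
     in transpose_mat X1 * proj_perp X2 * X1)"

definition J_mat :: "nat \<Rightarrow> real mat" where
  "J_mat t = mat t t (\<lambda>_. 1)"

end

theory Submission
  imports Defs
begin

(*
  Write T, L, R for the plot-by-treatment incidence matrices of the direct, left-neighbour and
  right-neighbour effects, so that A = (T | L | R), X1 = (T + L + R) / 3 and X2 = (A M | B).
  Binarity and neighbour balance at distances 1 and 2 determine all their Gram matrices:
  U'U = r I for U = T, L, R with r = l (t - 1), U'V = l (J - I) for U \<noteq> V, and U'B = N, the
  treatment-block incidence matrix. Hence X2'X2 = l t (Q\<^sub>3 \<otimes> Q\<^sub>t) \<oplus> k I\<^sub>b, whose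
  Moore-Penrose inverse is explicit. Moreover X1 = B N' / k + E, where B N' / k lies in the
  column space of X2 and E is orthogonal to it, so C = X1' E. The same Gram identities,
  together with N N' = (r - lam) I + lam J for lam = l (k - 1), then give
  C = b (k - 3) / (3 (t - 1)) Q\<^sub>t.
*)

section \<open>Moore-Penrose inverses and orthogonal projections\<close>

definition penrose_conditions :: "real mat \<Rightarrow> real mat \<Rightarrow> bool" where
  "penrose_conditions A X \<longleftrightarrow> A * X * A = A \<and> X * A * X = X \<and>
      transpose_mat (A * X) = A * X \<and> transpose_mat (X * A) = X * A"

lemma penrose_conditions_absorb_left:
  assumes A: "A \<in> carrier_mat n m" and X: "X \<in> carrier_mat m n" and Y: "Y \<in> carrier_mat m n"
    and PX: "penrose_conditions A X" and PY: "penrose_conditions A Y"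
  shows "X = X * (A * Y)"
proof -
  have AYA: "A * Y * A = A" and AY: "transpose_mat (A * Y) = A * Y"
    using PY unfolding penrose_conditions_def by auto
  have XAX: "X * A * X = X" and AX: "transpose_mat (A * X) = A * X"
    using PX unfolding penrose_conditions_def by auto
  have At_c: "transpose_mat A \<in> carrier_mat m n" and Xt_c: "transpose_mat X \<in> carrier_mat n m"
    and AX_c: "A * X \<in> carrier_mat n n" and AY_c: "A * Y \<in> carrier_mat n n"
    using A X Y by auto
  have At: "transpose_mat A = transpose_mat A * (A * Y)"
  proof -
    have "transpose_mat A = transpose_mat ((A * Y) * A)" using AYA by simp
    also have "\<dots> = transpose_mat A * transpose_mat (A * Y)" by (rule transpose_mult[OF AY_c A])
    finally show ?thesis using AY by simp
  qed
  have AX': "transpose_mat X * transpose_mat A = A * X"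
    using AX transpose_mult[OF A X] by simp
  have XAX': "X * (A * X) = X" using XAX assoc_mult_mat[OF X A X] by simp
  have "X = X * (transpose_mat X * transpose_mat A)" using XAX' AX' by simp
  also have "\<dots> = X * (transpose_mat X * (transpose_mat A * (A * Y)))" by (metis At)
  also have "\<dots> = (X * (A * X)) * (A * Y)"
    by (simp only: assoc_mult_mat[OF Xt_c At_c AY_c, symmetric] AX' assoc_mult_mat[OF X AX_c AY_c])
  finally show ?thesis using XAX' by simp
qed

lemma penrose_conditions_absorb_right:
  assumes A: "A \<in> carrier_mat n m" and X: "X \<in> carrier_mat m n" and Y: "Y \<in> carrier_mat m n"
    and PX: "penrose_conditions A X" and PY: "penrose_conditions A Y"
  shows "Y = X * (A * Y)"
proof -
  have YAY: "Y * A * Y = Y" and YA: "transpose_mat (Y * A) = Y * A"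
    using PY unfolding penrose_conditions_def by auto
  have AXA: "A * X * A = A" and XA: "transpose_mat (X * A) = X * A"
    using PX unfolding penrose_conditions_def by auto
  have At_c: "transpose_mat A \<in> carrier_mat m n" and Yt_c: "transpose_mat Y \<in> carrier_mat n m"
    and XA_c: "X * A \<in> carrier_mat m m" and YA_c: "Y * A \<in> carrier_mat m m"
    and AYA_c: "A * (Y * A) \<in> carrier_mat n m"
    using A X Y by auto
  have At: "transpose_mat A = (X * A) * transpose_mat A"
  proof -
    have "transpose_mat A = transpose_mat (A * (X * A))" using AXA assoc_mult_mat[OF A X A] by simp
    also have "\<dots> = transpose_mat (X * A) * transpose_mat A" by (rule transpose_mult[OF A XA_c])
    finally show ?thesis using XA by simp
  qed
  have YA': "transpose_mat A * transpose_mat Y = Y * A"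
    using YA transpose_mult[OF Y A] by simp
  have "Y = (transpose_mat A * transpose_mat Y) * Y" using YAY YA' by simp
  also have "\<dots> = (((X * A) * transpose_mat A) * transpose_mat Y) * Y" by (metis At)
  also have "\<dots> = ((X * A) * (transpose_mat A * transpose_mat Y)) * Y"
    by (simp only: assoc_mult_mat[OF XA_c At_c Yt_c])
  also have "\<dots> = (X * (A * (Y * A))) * Y"
    by (simp only: YA' assoc_mult_mat[OF X A YA_c])
  also have "\<dots> = X * (A * (Y * A * Y))"
    by (simp only: assoc_mult_mat[OF X AYA_c Y] assoc_mult_mat[OF A YA_c Y])
  finally show ?thesis using YAY by simp
qed

lemma penrose_conditions_unique:
  assumes "A \<in> carrier_mat n m" "X \<in> carrier_mat m n" "Y \<in> carrier_mat m n"
    and "penrose_conditions A X" "penrose_conditions A Y"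
  shows "X = Y"
  using penrose_conditions_absorb_left[OF assms] penrose_conditions_absorb_right[OF assms] by simp

lemma mp_inverse_eqI:
  assumes A: "A \<in> carrier_mat n m" and X: "X \<in> carrier_mat m n" and P: "penrose_conditions A X"
  shows "mp_inverse A = X"
  unfolding mp_inverse_def
proof (rule the_equality)
  show "X \<in> carrier_mat (dim_col A) (dim_row A) \<and> A * X * A = A \<and> X * A * X = X \<and>
      transpose_mat (A * X) = A * X \<and> transpose_mat (X * A) = X * A"
    using A X P unfolding penrose_conditions_def by auto
next
  fix Y assume "Y \<in> carrier_mat (dim_col A) (dim_row A) \<and> A * Y * A = A \<and> Y * A * Y = Y \<and>
      transpose_mat (A * Y) = A * Y \<and> transpose_mat (Y * A) = Y * A"
  then show "Y = X"
    using penrose_conditions_unique[OF A _ X _ P, of Y] A unfolding penrose_conditions_def by auto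
qed

lemma gram_eq_zero_imp_zero:
  fixes W :: "real mat"
  assumes W: "W \<in> carrier_mat n m" and gram: "transpose_mat W * W = 0\<^sub>m m m"
  shows "W = 0\<^sub>m n m"
proof (rule eq_matI)
  fix i j assume i: "i < dim_row (0\<^sub>m n m :: real mat)" and j: "j < dim_col (0\<^sub>m n m :: real mat)"
  have "(transpose_mat W * W) $$ (j, j) = 0" using gram j by simp
  then have "(\<Sum>r\<in>{0..<n}. (W $$ (r, j))\<^sup>2) = 0"
    using W j by (simp add: scalar_prod_def power2_eq_square)
  then have "\<forall>r\<in>{0..<n}. (W $$ (r, j))\<^sup>2 = 0"
    by (subst (asm) sum_nonneg_eq_0_iff) auto
  then show "W $$ (i, j) = 0\<^sub>m n m $$ (i, j)" using i j by simp
qed (use W in auto)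

text \<open>The columns of X Z X' X - X lie in the column space of X and are orthogonal to it.\<close>

lemma ginverse_gram_mult_cancel:
  fixes X Z :: "real mat"
  assumes X: "X \<in> carrier_mat n m" and Z: "Z \<in> carrier_mat m m"
    and g: "(transpose_mat X * X) * Z * (transpose_mat X * X) = transpose_mat X * X"
  shows "X * Z * transpose_mat X * X = X"
proof -
  define G where "G = transpose_mat X * X"
  have G: "G \<in> carrier_mat m m" using X unfolding G_def by auto
  have GZG: "G * (Z * G) = G" using g G Z unfolding G_def[symmetric] by simp
  define V where "V = Z * G - 1\<^sub>m m"
  have V: "V \<in> carrier_mat m m" using G Z unfolding V_def by auto
  have XV: "transpose_mat X * (X * V) = 0\<^sub>m m m"
  proof -
    have "transpose_mat X * (X * V) = G * V" using X V unfolding G_def by simp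
    also have "\<dots> = G * (Z * G) - G * 1\<^sub>m m"
      unfolding V_def using G Z by (intro mult_minus_distrib_mat[of _ m m]) auto
    finally show ?thesis using GZG G by simp
  qed
  have "transpose_mat (X * V) * (X * V) = transpose_mat V * (transpose_mat X * (X * V))"
    using X V by (simp only: transpose_mult[OF X V]) (rule assoc_mult_mat[of _ m m _ n _ m], auto)
  also have "\<dots> = 0\<^sub>m m m" using XV V by simp
  finally have "X * V = 0\<^sub>m n m" using X V by (intro gram_eq_zero_imp_zero[of _ n]) auto
  then have XZG: "X * (Z * G) - X * 1\<^sub>m m = 0\<^sub>m n m" unfolding V_def using X Z G
    by (subst mult_minus_distrib_mat[symmetric, of _ n m]) auto
  have "X * (Z * G) = X"
  proof (rule eq_matI)
    fix i j assume ij: "i < dim_row X" "j < dim_col X"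
    have "(X * (Z * G) - X * 1\<^sub>m m) $$ (i, j) = 0" using XZG ij X by simp
    then show "(X * (Z * G)) $$ (i, j) = X $$ (i, j)" using ij X Z G by simp
  qed (use X Z G in auto)
  have "X * Z * transpose_mat X * X = (X * Z) * G"
    unfolding G_def using X Z by (intro assoc_mult_mat[of _ n m _ n _ m]) auto
  also have "\<dots> = X * (Z * G)" using X Z G by (intro assoc_mult_mat[of _ n m _ m _ m]) auto
  finally show ?thesis using \<open>X * (Z * G) = X\<close> by simp
qed

lemma proj_perp_carrier: "X \<in> carrier_mat n m \<Longrightarrow> proj_perp X \<in> carrier_mat n n"
  unfolding proj_perp_def proj_mat_def by auto

lemma proj_perp_mult_orth_decomp:
  fixes X Z H E :: "real mat"
  assumes X: "X \<in> carrier_mat n m" and Z: "Z \<in> carrier_mat m m"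
    and P: "penrose_conditions (transpose_mat X * X) Z"
    and H: "H \<in> carrier_mat m p" and E: "E \<in> carrier_mat n p"
    and orth: "transpose_mat X * E = 0\<^sub>m m p"
  shows "proj_perp X * (X * H + E) = E"
proof -
  define Pr where "Pr = X * Z * transpose_mat X"
  have Pr: "Pr \<in> carrier_mat n n" using X Z unfolding Pr_def by auto
  have "proj_mat X = Pr"
    unfolding proj_mat_def Pr_def using mp_inverse_eqI[OF _ Z P] X by auto
  then have perp: "proj_perp X = 1\<^sub>m n - Pr" unfolding proj_perp_def using X by simp
  have "Pr * X = X"
    using ginverse_gram_mult_cancel[OF X Z] P unfolding Pr_def penrose_conditions_def by simp
  then have PrXH: "Pr * (X * H) = X * H" using Pr X H by (metis assoc_mult_mat)
  have "Pr * E = (X * Z) * (transpose_mat X * E)"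
    unfolding Pr_def using X Z E by (intro assoc_mult_mat[of _ n m _ n _ p]) auto
  then have PrE: "Pr * E = 0\<^sub>m n p" using orth X Z by simp
  have "proj_perp X * (X * H + E) = (X * H + E) - Pr * (X * H + E)"
    unfolding perp using X H E Pr by (subst minus_mult_distrib_mat[of _ n n]) auto
  also have "Pr * (X * H + E) = Pr * (X * H) + Pr * E"
    using Pr X H E by (intro mult_add_distrib_mat[of _ n n]) auto
  also have "\<dots> = X * H + 0\<^sub>m n p" using PrXH PrE by simp
  finally show ?thesis by (intro eq_matI) (use X H E in auto)
qed

lemma sum_lessThan_add:
  fixes f :: "nat \<Rightarrow> 'a::comm_monoid_add"
  shows "(\<Sum>s<m + n. f s) = (\<Sum>s<m. f s) + (\<Sum>s<n. f (m + s))"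
  by (induction n) (simp_all add: add.assoc)

lemma sum_lessThan_mult:
  fixes f :: "nat \<Rightarrow> 'a::comm_monoid_add"
  shows "(\<Sum>s<m * n. f s) = (\<Sum>u<m. \<Sum>v<n. f (u * n + v))"
proof (induction m)
  case (Suc m)
  have "(\<Sum>s<Suc m * n. f s) = (\<Sum>s<m * n + n. f s)" by (simp add: add.commute)
  then show ?case using Suc by (simp add: sum_lessThan_add)
qed simp

lemma sum_lessThan_3:
  fixes f :: "nat \<Rightarrow> 'a::comm_monoid_add"
  shows "(\<Sum>u<3. f u) = f 0 + f 1 + f 2"
  by (simp add: numeral_3_eq_3 numeral_2_eq_2 lessThan_Suc add.commute add.left_commute)

lemma sum_lincomb_mult_lincomb:
  fixes \<alpha> \<beta> :: "'a \<Rightarrow> real"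
  shows "(\<Sum>r\<in>R. (\<Sum>u\<in>U. \<alpha> u * f u r) * (\<Sum>v\<in>V. \<beta> v * g v r)) =
    (\<Sum>u\<in>U. \<Sum>v\<in>V. \<alpha> u * \<beta> v * (\<Sum>r\<in>R. f u r * g v r))"
proof -
  have "(\<Sum>r\<in>R. (\<Sum>u\<in>U. \<alpha> u * f u r) * (\<Sum>v\<in>V. \<beta> v * g v r)) =
      (\<Sum>r\<in>R. \<Sum>u\<in>U. \<Sum>v\<in>V. \<alpha> u * \<beta> v * (f u r * g v r))"
    by (simp add: sum_product mult_ac)
  also have "\<dots> = (\<Sum>u\<in>U. \<Sum>r\<in>R. \<Sum>v\<in>V. \<alpha> u * \<beta> v * (f u r * g v r))"
    by (rule sum.swap)
  also have "\<dots> = (\<Sum>u\<in>U. \<Sum>v\<in>V. \<Sum>r\<in>R. \<alpha> u * \<beta> v * (f u r * g v r))"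
    by (simp add: sum.swap[of _ R])
  finally show ?thesis by (simp add: sum_distrib_left)
qed

lemma sum_lincomb_mult:
  fixes \<alpha> :: "'a \<Rightarrow> real"
  shows "(\<Sum>r\<in>R. (\<Sum>u\<in>U. \<alpha> u * f u r) * g r) = (\<Sum>u\<in>U. \<alpha> u * (\<Sum>r\<in>R. f u r * g r))"
proof -
  have "(\<Sum>r\<in>R. (\<Sum>u\<in>U. \<alpha> u * f u r) * g r) = (\<Sum>r\<in>R. \<Sum>u\<in>U. \<alpha> u * (f u r * g r))"
    by (simp only: sum_distrib_right mult.assoc)
  also have "\<dots> = (\<Sum>u\<in>U. \<Sum>r\<in>R. \<alpha> u * (f u r * g r))" by (rule sum.swap)
  finally show ?thesis by (simp add: sum_distrib_left)
qed

declare sum_of_bool_eq [simp del] sum_of_bool_mult_eq [simp del] sum_mult_of_bool_eq [simp del]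

lemma card_filter_eq_sum_of_bool:
  assumes "finite A"
  shows "real (card {x \<in> A. P x}) = (\<Sum>x\<in>A. of_bool (P x))"
proof -
  have "(\<Sum>x\<in>A. if P x then 1 else 0 :: real) = (\<Sum>x\<in>{x \<in> A. P x}. 1)"
    by (rule sum.inter_filter[symmetric, OF assms])
  then show ?thesis unfolding of_bool_def by simp
qed

lemma card_filter_lessThan:
  "real (card {i. i < b \<and> P i}) = (\<Sum>i<b. of_bool (P i))" for b :: nat
proof -
  have filter: "{i. i < b \<and> P i} = {i \<in> {..<b}. P i}" by auto
  show ?thesis unfolding filter by (rule card_filter_eq_sum_of_bool) simp
qed

lemma card_filter_lessThan_pairs:
  "real (card {(i, j). i < b \<and> j < k \<and> P i j}) = (\<Sum>i<b. \<Sum>j<k. of_bool (P i j))"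
  for b k :: nat
proof -
  have filter: "{(i, j). i < b \<and> j < k \<and> P i j} =
      {x \<in> {..<b} \<times> {..<k}. case x of (i, j) \<Rightarrow> P i j}"
    by auto
  have "real (card {(i, j). i < b \<and> j < k \<and> P i j}) =
      (\<Sum>x\<in>{..<b} \<times> {..<k}. of_bool (case x of (i, j) \<Rightarrow> P i j))"
    unfolding filter by (rule card_filter_eq_sum_of_bool) simp
  also have "\<dots> = (\<Sum>(i, j)\<in>{..<b} \<times> {..<k}. of_bool (P i j))"
    by (rule sum.cong) auto
  finally show ?thesis by (simp only: sum.cartesian_product)
qed

lemma sum_delta_of_bool:
  fixes f :: "'a \<Rightarrow> real"
  assumes "finite A" "x \<in> A"
  shows "(\<Sum>z\<in>A. of_bool (x = z) * f z) = f x"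
proof -
  have "(\<Sum>z\<in>A. of_bool (x = z) * f z) = (\<Sum>z\<in>A. if x = z then f z else 0)"
    by (rule sum.cong) auto
  then show ?thesis using assms by simp
qed

lemma sum_delta_of_bool':
  fixes f :: "'a \<Rightarrow> real"
  assumes "finite A" "x \<in> A"
  shows "(\<Sum>z\<in>A. of_bool (z = x) * f z) = f x"
  using sum_delta_of_bool[OF assms, of f] by (simp add: eq_commute)

lemma sum_mult_delta_of_bool:
  fixes f :: "'a \<Rightarrow> real"
  assumes "finite A" "x \<in> A"
  shows "(\<Sum>z\<in>A. f z * of_bool (z = x)) = f x"
  using sum_delta_of_bool'[OF assms, of f] by (simp add: mult.commute)

definition centering :: "nat \<Rightarrow> nat \<Rightarrow> nat \<Rightarrow> real" where
  "centering n x y = of_bool (x = y) - 1 / real n"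

lemma centering_sym: "centering n x y = centering n y x"
  unfolding centering_def by auto

lemma sum_centering: "x < n \<Longrightarrow> (\<Sum>y<n. centering n x y) = 0"
  unfolding centering_def by (simp add: sum_subtractf of_bool_def)

lemma centering_idem:
  assumes "x < n" "y < n"
  shows "(\<Sum>z<n. centering n x z * centering n z y) = centering n x y"
proof -
  define c where "c = 1 / real n"
  have nc: "real n * (c * c) = c" unfolding c_def using assms by (simp add: field_simps)
  have "(\<Sum>z<n. centering n x z * centering n z y) =
      (\<Sum>z<n. of_bool (x = z) * of_bool (z = y) - c * of_bool (x = z) - c * of_bool (z = y) + c * c)"
    unfolding centering_def c_def by (intro sum.cong refl) (simp add: algebra_simps)
  also have "\<dots> = (\<Sum>z<n. of_bool (x = z) * of_bool (z = y)) - c * (\<Sum>z<n. of_bool (x = z))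
      - c * (\<Sum>z<n. of_bool (z = y)) + real n * (c * c)"
    by (simp add: sum.distrib sum_subtractf sum_distrib_left)
  also have "\<dots> = of_bool (x = y) - c - c + c"
    using assms nc by (simp add: sum_delta_of_bool) (simp add: of_bool_def)
  finally show ?thesis unfolding centering_def c_def by simp
qed

section \<open>Counting in a circular design neighbour-balanced at distances 1 and 2\<close>

lemma rnb_less: "0 < k \<Longrightarrow> rnb k j < k"
  unfolding rnb_def by simp

lemma lnb_less: "0 < k \<Longrightarrow> lnb k j < k"
  unfolding lnb_def by simp

lemma lnb_rnb: "j < k \<Longrightarrow> lnb k (rnb k j) = j"
  unfolding lnb_def rnb_def by (cases "j + 1 = k") (auto simp: mod_Suc_eq)

lemma rnb_lnb: "j < k \<Longrightarrow> rnb k (lnb k j) = j"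
  unfolding lnb_def rnb_def by (cases j) (auto simp: mod_Suc_eq)

lemma bij_betw_rnb: "0 < k \<Longrightarrow> bij_betw (rnb k) {..<k} {..<k}"
  by (rule bij_betw_byWitness[where f'="lnb k"]) (auto simp: lnb_rnb rnb_lnb rnb_less lnb_less)

lemma bij_betw_lnb: "0 < k \<Longrightarrow> bij_betw (lnb k) {..<k} {..<k}"
  by (rule bij_betw_byWitness[where f'="rnb k"]) (auto simp: lnb_rnb rnb_lnb rnb_less lnb_less)

lemma rnb_neq: "1 < k \<Longrightarrow> j < k \<Longrightarrow> rnb k j \<noteq> j"
  unfolding rnb_def by (cases "j + 1 = k") auto

lemma lnb_neq: "1 < k \<Longrightarrow> j < k \<Longrightarrow> lnb k j \<noteq> j"
  by (metis rnb_lnb rnb_neq)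

lemma lnb_neq_rnb: "2 < k \<Longrightarrow> j < k \<Longrightarrow> lnb k j \<noteq> rnb k j"
proof
  assume k: "2 < k" "j < k" and eq: "lnb k j = rnb k j"
  then have "j = rnb k (rnb k j)" by (metis rnb_lnb)
  also have "\<dots> = (j + 2) mod k" unfolding rnb_def by (simp add: mod_Suc_eq)
  finally show False using k by (cases "j + 2 < k") (auto simp: le_mod_geq)
qed

locale cnbd2_design =
  fixes t b k l :: nat and d :: "nat \<Rightarrow> nat \<Rightarrow> nat"
  assumes b_pos: "0 < b" and k_ge_3: "3 \<le> k"
    and l_eq: "l * (t * (t - 1)) = b * k"
    and cnbd2: "CNBD2 t b k l d"
begin

lemma d_less: "i < b \<Longrightarrow> j < k \<Longrightarrow> d i j < t"
  using cnbd2 unfolding CNBD2_def CNBD_def circ_design_def by auto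

lemma inj_on_d: "i < b \<Longrightarrow> inj_on (d i) {..<k}"
  using cnbd2 unfolding CNBD2_def CNBD_def binary_design_def by auto

lemma balanced: "balanced_block_design t b k d"
  using cnbd2 unfolding CNBD2_def CNBD_def by auto

lemma card_right_neighbour_pairs:
  "a < t \<Longrightarrow> c < t \<Longrightarrow> a \<noteq> c \<Longrightarrow>
   card {(i, j). i < b \<and> j < k \<and> d i j = a \<and> d i (rnb k j) = c} = l"
  using cnbd2 unfolding CNBD2_def CNBD_def by auto

lemma card_distance_2_pairs:
  "a < t \<Longrightarrow> c < t \<Longrightarrow> a \<noteq> c \<Longrightarrow>
   card {(i, j). i < b \<and> j < k \<and> d i (lnb k j) = a \<and> d i (rnb k j) = c} = l"
  using cnbd2 unfolding CNBD2_def by auto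

lemma k_pos: "0 < k"
  using k_ge_3 by simp

lemma k_le_t: "k \<le> t"
proof -
  have "card (d 0 ` {..<k}) = k" using card_image[OF inj_on_d[OF b_pos]] by simp
  moreover have "d 0 ` {..<k} \<subseteq> {..<t}" using d_less b_pos by auto
  ultimately show ?thesis using card_mono[of "{..<t}" "d 0 ` {..<k}"] by simp
qed

lemma t_gt_1: "1 < t"
  using k_ge_3 k_le_t by simp

lemma l_pos: "0 < l"
  using l_eq b_pos k_pos by (cases l) auto

lemma l_eq_real: "real l * (real t * (real t - 1)) = real b * real k"
proof -
  have "real (l * (t * (t - 1))) = real (b * k)" using l_eq by simp
  then show ?thesis using t_gt_1 by (simp add: of_nat_diff)
qed

lemma t_pos: "0 < t"
  using t_gt_1 by simp

text \<open>Effects are indexed by u = 0, 1, 2 for \<open>\<tau>\<close>, \<open>\<lambda>\<close>, \<open>\<rho>\<close>: the response on inner plot j of a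
  block receives effect u from the treatment on plot effect_plot u j of that block.\<close>

definition effect_plot :: "nat \<Rightarrow> nat \<Rightarrow> nat" where
  "effect_plot u j = (if u = 0 then j else if u = 1 then lnb k j else rnb k j)"

definition incidence :: "nat \<Rightarrow> nat \<Rightarrow> real" where
  "incidence a i = of_bool (a \<in> d i ` {..<k})"

definition replication :: real where
  "replication = real l * (real t - 1)"

lemma effect_plot_less: "j < k \<Longrightarrow> effect_plot u j < k"
  using k_pos unfolding effect_plot_def by (auto simp: lnb_less rnb_less)

lemma effect_plot_neq: "u < 3 \<Longrightarrow> v < 3 \<Longrightarrow> u \<noteq> v \<Longrightarrow> j < k \<Longrightarrow> effect_plot u j \<noteq> effect_plot v j"
  using k_ge_3 lnb_neq[of k j] rnb_neq[of k j] lnb_neq_rnb[of k j] unfolding effect_plot_def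
  by (auto simp: less_Suc_eq numeral_3_eq_3)

lemma sum_rnb: "(\<Sum>j<k. F (rnb k j)) = (\<Sum>j<k. F j)"
  using sum.reindex_bij_betw[OF bij_betw_rnb[OF k_pos]] by simp

lemma sum_effect_plot: "(\<Sum>j<k. F (effect_plot u j)) = (\<Sum>j<k. F j)"
proof -
  have "(\<Sum>j<k. F (lnb k j)) = (\<Sum>j<k. F j)"
    using sum.reindex_bij_betw[OF bij_betw_lnb[OF k_pos]] by simp
  then show ?thesis using sum_rnb[of F] unfolding effect_plot_def by (cases "u = 0"; cases "u = 1") simp_all
qed

lemma sum_treatment_occurrence:
  assumes i: "i < b"
  shows "(\<Sum>j<k. of_bool (d i j = a)) = incidence a i"
proof -
  have "(\<Sum>j<k. of_bool (d i j = a)) = real (card {j. j < k \<and> d i j = a})"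
    by (rule card_filter_lessThan[symmetric])
  also have "\<dots> = incidence a i"
  proof (cases "a \<in> d i ` {..<k}")
    case True
    then obtain j0 where j0: "j0 < k" "d i j0 = a" by auto
    have "{j. j < k \<and> d i j = a} = {j0}"
      using j0 inj_on_d[OF i] unfolding inj_on_def by auto
    then show ?thesis using True by (simp add: incidence_def)
  next
    case False
    then have "{j. j < k \<and> d i j = a} = {}" by auto
    then show ?thesis using False by (simp add: incidence_def)
  qed
  finally show ?thesis .
qed

lemma sum_effect_treatment_occurrence:
  "i < b \<Longrightarrow> (\<Sum>j<k. of_bool (d i (effect_plot u j) = a)) = incidence a i"
  by (rule trans[OF sum_effect_plot[of "\<lambda>j. of_bool (d i j = a)"] sum_treatment_occurrence])

lemma sum_incidence_treatments:
  assumes i: "i < b"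
  shows "(\<Sum>a<t. incidence a i) = real k"
proof -
  have "(\<Sum>a<t. incidence a i) = (\<Sum>a<t. \<Sum>j<k. of_bool (d i j = a))"
    by (simp only: sum_treatment_occurrence[OF i])
  also have "\<dots> = (\<Sum>j<k. \<Sum>a<t. of_bool (d i j = a))" by (rule sum.swap)
  also have "\<dots> = (\<Sum>j<k. 1)"
    using d_less[OF i] by (intro sum.cong refl) (simp add: of_bool_def)
  finally show ?thesis by simp
qed

lemma sum_incidence_blocks:
  assumes a: "a < t"
  shows "(\<Sum>i<b. incidence a i) = replication"
proof -
  obtain r where r: "\<forall>a<t. card {(i, j). i < b \<and> j < k \<and> d i j = a} = r"
    using conjunct1[OF balanced[unfolded balanced_block_design_def]] by blast
  have rep: "(\<Sum>i<b. incidence a i) = real r" if "a < t" for a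
  proof -
    have "real r = real (card {(i, j). i < b \<and> j < k \<and> d i j = a})" using r that by simp
    also have "\<dots> = (\<Sum>i<b. \<Sum>j<k. of_bool (d i j = a))" by (rule card_filter_lessThan_pairs)
    also have "\<dots> = (\<Sum>i<b. incidence a i)"
      by (rule sum.cong[OF refl]) (simp only: lessThan_iff sum_treatment_occurrence)
    finally show ?thesis by simp
  qed
  have "real t * real r = (\<Sum>a<t. \<Sum>i<b. incidence a i)" using rep by simp
  also have "\<dots> = (\<Sum>i<b. \<Sum>a<t. incidence a i)" by (rule sum.swap)
  also have "\<dots> = real t * replication"
    using sum_incidence_treatments l_eq_real unfolding replication_def by (simp add: algebra_simps)
  finally show ?thesis using rep[OF a] t_gt_1 by simp
qed

lemma sum_incidence_mult_incidence:
  assumes a: "a < t" and c: "c < t"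
  shows "(\<Sum>i<b. incidence a i * incidence c i) =
    (if a = c then replication else real l * (real k - 1))"
proof -
  have sq: "incidence x i * incidence x i = incidence x i" for x i
    by (simp add: incidence_def)
  obtain lam where lam: "\<forall>a<t. \<forall>c<t. a \<noteq> c \<longrightarrow>
      card {i. i < b \<and> a \<in> d i ` {..<k} \<and> c \<in> d i ` {..<k}} = lam"
    using conjunct2[OF balanced[unfolded balanced_block_design_def]] by blast
  have pair: "(\<Sum>i<b. incidence a i * incidence c i) = real lam" if "c < t" "a \<noteq> c" for c
  proof -
    have "real lam = real (card {i. i < b \<and> a \<in> d i ` {..<k} \<and> c \<in> d i ` {..<k}})"
      using lam a that by simp
    also have "\<dots> = (\<Sum>i<b. of_bool (a \<in> d i ` {..<k} \<and> c \<in> d i ` {..<k}))"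
      by (rule card_filter_lessThan)
    finally show ?thesis by (simp add: incidence_def of_bool_conj)
  qed
  have "replication * real k = (\<Sum>i<b. incidence a i * real k)"
    by (simp flip: sum_distrib_right add: sum_incidence_blocks[OF a])
  also have "\<dots> = (\<Sum>i<b. \<Sum>c<t. incidence a i * incidence c i)"
    using sum_incidence_treatments by (simp add: sum_distrib_left[symmetric])
  also have "\<dots> = (\<Sum>c<t. \<Sum>i<b. incidence a i * incidence c i)" by (rule sum.swap)
  also have "\<dots> = (\<Sum>i<b. incidence a i * incidence a i) +
      (\<Sum>c\<in>{..<t} - {a}. \<Sum>i<b. incidence a i * incidence c i)"
    using a by (subst sum.remove[of _ a]) auto
  also have "\<dots> = replication + (\<Sum>c\<in>{..<t} - {a}. real lam)"
    using pair sum_incidence_blocks[OF a] by (simp add: sq)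
  also have "\<dots> = replication + (real t - 1) * real lam"
    using a by (simp add: of_nat_diff)
  finally have "(real t - 1) * real lam = (real t - 1) * (real l * (real k - 1))"
    unfolding replication_def by (simp add: algebra_simps)
  then have "real lam = real l * (real k - 1)" using t_gt_1 by simp
  then show ?thesis using pair[OF c] sum_incidence_blocks[OF a] by (cases "a = c") (simp_all add: sq)
qed

definition cooccurrence :: "nat \<Rightarrow> nat \<Rightarrow> nat \<Rightarrow> nat \<Rightarrow> real" where
  "cooccurrence u v a c =
    (\<Sum>i<b. \<Sum>j<k. of_bool (d i (effect_plot u j) = a \<and> d i (effect_plot v j) = c))"

definition effect_gram :: "nat \<Rightarrow> nat \<Rightarrow> nat \<Rightarrow> nat \<Rightarrow> real" where
  "effect_gram u v a c =
    (if u = v then (if a = c then replication else 0) else (if a = c then 0 else real l))"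

lemma cooccurrence_swap: "cooccurrence u v a c = cooccurrence v u c a"
  unfolding cooccurrence_def by (simp add: conj_commute)

lemma cooccurrence_same_effect:
  assumes "a < t"
  shows "cooccurrence u u a c = (if a = c then replication else 0)"
proof (cases "a = c")
  case True
  have "cooccurrence u u a c = (\<Sum>i<b. \<Sum>j<k. of_bool (d i (effect_plot u j) = a))"
    unfolding cooccurrence_def True by simp
  also have "\<dots> = (\<Sum>i<b. incidence a i)"
    by (rule sum.cong[OF refl]) (simp only: lessThan_iff sum_effect_treatment_occurrence)
  finally show ?thesis using sum_incidence_blocks assms True by simp
next
  case False
  then have "cooccurrence u u a c = 0" unfolding cooccurrence_def by (intro sum.neutral ballI) auto
  then show ?thesis using False by simp
qed

lemma cooccurrence_same_treatment:
  assumes "u < 3" "v < 3" "u \<noteq> v"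
  shows "cooccurrence u v a a = 0"
proof -
  have "d i (effect_plot u j) \<noteq> d i (effect_plot v j)" if "i < b" "j < k" for i j
    using inj_onD[OF inj_on_d[OF that(1)], of "effect_plot u j" "effect_plot v j"]
      effect_plot_neq[OF assms that(2)] effect_plot_less[OF that(2)] by auto
  then show ?thesis unfolding cooccurrence_def by (intro sum.neutral ballI) force
qed

lemma cooccurrence_direct_right:
  assumes "a < t" "c < t" "a \<noteq> c"
  shows "cooccurrence 0 2 a c = real l"
proof -
  have "cooccurrence 0 2 a c = real (card {(i, j). i < b \<and> j < k \<and> d i j = a \<and> d i (rnb k j) = c})"
    unfolding cooccurrence_def effect_plot_def card_filter_lessThan_pairs by simp
  then show ?thesis using card_right_neighbour_pairs[OF assms] by simp
qed

lemma cooccurrence_left_right: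
  assumes "a < t" "c < t" "a \<noteq> c"
  shows "cooccurrence 1 2 a c = real l"
proof -
  have "cooccurrence 1 2 a c =
      real (card {(i, j). i < b \<and> j < k \<and> d i (lnb k j) = a \<and> d i (rnb k j) = c})"
    unfolding cooccurrence_def effect_plot_def card_filter_lessThan_pairs by simp
  then show ?thesis using card_distance_2_pairs[OF assms] by simp
qed

lemma cooccurrence_direct_left:
  assumes "a < t" "c < t" "a \<noteq> c"
  shows "cooccurrence 0 1 a c = real l"
proof -
  have "cooccurrence 0 1 a c = (\<Sum>i<b. \<Sum>j<k. of_bool (d i j = a \<and> d i (lnb k j) = c))"
    unfolding cooccurrence_def effect_plot_def by simp
  also have "\<dots> = (\<Sum>i<b. \<Sum>j<k. of_bool (d i (rnb k j) = a \<and> d i (lnb k (rnb k j)) = c))"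
    by (subst sum_rnb[symmetric]) simp
  also have "\<dots> = cooccurrence 2 0 a c"
    unfolding cooccurrence_def effect_plot_def by (intro sum.cong refl) (simp add: lnb_rnb)
  finally show ?thesis using cooccurrence_swap cooccurrence_direct_right assms by simp
qed

lemma cooccurrence_eq_effect_gram:
  assumes "u < 3" "v < 3" "a < t" "c < t"
  shows "cooccurrence u v a c = effect_gram u v a c"
proof (cases "u = v")
  case True
  then show ?thesis using cooccurrence_same_effect assms by (simp add: effect_gram_def)
next
  case uv: False
  show ?thesis
  proof (cases "a = c")
    case True
    then show ?thesis using cooccurrence_same_treatment assms uv by (simp add: effect_gram_def)
  next
    case False
    have "u = 0 \<and> v = 1 \<or> u = 0 \<and> v = 2 \<or> u = 1 \<and> v = 2 \<or> v = 0 \<and> u = 1 \<or> v = 0 \<and> u = 2 \<or>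
        v = 1 \<and> u = 2"
      using assms(1,2) uv by auto
    then have "cooccurrence u v a c = real l"
      using cooccurrence_direct_left cooccurrence_direct_right cooccurrence_left_right
        cooccurrence_swap assms(3,4) False by metis
    then show ?thesis using uv False by (simp add: effect_gram_def)
  qed
qed

definition plot_effect :: "nat \<Rightarrow> nat \<Rightarrow> nat \<Rightarrow> real" where
  "plot_effect u a r = of_bool (d (r div k) (effect_plot u (r mod k)) = a)"

lemma sum_plots: "(\<Sum>r<b * k. F r) = (\<Sum>i<b. \<Sum>j<k. F (i * k + j))"
  by (rule sum_lessThan_mult)

lemma plot_effect_index: "j < k \<Longrightarrow> plot_effect u a (i * k + j) = of_bool (d i (effect_plot u j) = a)"
  unfolding plot_effect_def by simp

lemma sum_plot_effect_mult_plot_effect: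
  assumes "u < 3" "v < 3" "a < t" "c < t"
  shows "(\<Sum>r<b * k. plot_effect u a r * plot_effect v c r) = effect_gram u v a c"
proof -
  have "(\<Sum>r<b * k. plot_effect u a r * plot_effect v c r) = cooccurrence u v a c"
    unfolding sum_plots cooccurrence_def
    by (intro sum.cong refl) (simp add: plot_effect_index of_bool_conj)
  then show ?thesis using cooccurrence_eq_effect_gram[OF assms] by simp
qed

lemma sum_plot_effect_mult_block:
  "(\<Sum>r<b * k. plot_effect u a r * F (r div k)) = (\<Sum>i<b. incidence a i * F i)"
proof -
  have "(\<Sum>r<b * k. plot_effect u a r * F (r div k)) =
      (\<Sum>i<b. (\<Sum>j<k. of_bool (d i (effect_plot u j) = a)) * F i)"
    unfolding sum_plots using k_pos by (simp add: plot_effect_index sum_distrib_right)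
  also have "\<dots> = (\<Sum>i<b. incidence a i * F i)"
    by (rule sum.cong[OF refl]) (simp only: lessThan_iff sum_effect_treatment_occurrence)
  finally show ?thesis .
qed

lemma sum_block: "(\<Sum>r<b * k. F (r div k)) = real k * (\<Sum>i<b. F i)"
  unfolding sum_plots using k_pos by (simp add: sum_distrib_left)

lemma sum_effect_comb_mult_effect_comb:
  assumes "a < t" "c < t"
  shows "(\<Sum>r<b * k. (\<Sum>u<3. \<alpha> u * plot_effect u a r) * (\<Sum>v<3. \<beta> v * plot_effect v c r)) =
    (\<Sum>u<3. \<Sum>v<3. \<alpha> u * \<beta> v * effect_gram u v a c)"
  unfolding sum_lincomb_mult_lincomb
  using assms by (intro sum.cong refl) (simp add: sum_plot_effect_mult_plot_effect)

lemma sum_effect_comb_mult_block: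
  "(\<Sum>r<b * k. (\<Sum>u<3. \<alpha> u * plot_effect u a r) * F (r div k)) =
    (\<Sum>u<3. \<alpha> u) * (\<Sum>i<b. incidence a i * F i)"
  unfolding sum_lincomb_mult by (simp add: sum_plot_effect_mult_block sum_distrib_right)

end

section \<open>The design matrices\<close>

lemma dim_row_hcat: "dim_row (hcat X Y) = dim_row X"
  unfolding hcat_def by simp

lemma dim_col_hcat: "dim_col (hcat X Y) = dim_col X + dim_col Y"
  unfolding hcat_def by simp

lemma hcat_index:
  "i < dim_row X \<Longrightarrow> j < dim_col X + dim_col Y \<Longrightarrow>
   hcat X Y $$ (i, j) = (if j < dim_col X then X $$ (i, j) else Y $$ (i, j - dim_col X))"
  unfolding hcat_def by simp

lemma mult_add_eq_iff_div_mod: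
  fixes t :: nat
  assumes "v < t"
  shows "u * t + v = q \<longleftrightarrow> u = q div t \<and> v = q mod t"
  using assms by auto

context cnbd2_design
begin

lemma sum_lessThan_3t: "(\<Sum>s<3 * t. F s) = (\<Sum>u<3. \<Sum>v<t. F (u * t + v))"
  by (rule sum_lessThan_mult)

lemma block_less: "r < b * k \<Longrightarrow> r div k < b"
  by (simp add: less_mult_imp_div_less)

lemma index_div_less_3: "p < 3 * t \<Longrightarrow> p div t < 3"
  using t_pos by (simp add: div_less_iff_less_mult mult.commute)

lemma T_mat_index: "r < b * k \<Longrightarrow> a < t \<Longrightarrow> T_mat t b k d $$ (r, a) = plot_effect 0 a r"
  unfolding T_mat_def plot_effect_def effect_plot_def of_bool_def by simp

lemma L_mat_index: "r < b * k \<Longrightarrow> a < t \<Longrightarrow> L_mat t b k d $$ (r, a) = plot_effect 1 a r"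
  unfolding L_mat_def plot_effect_def effect_plot_def of_bool_def by simp

lemma R_mat_index: "r < b * k \<Longrightarrow> a < t \<Longrightarrow> R_mat t b k d $$ (r, a) = plot_effect 2 a r"
  unfolding R_mat_def plot_effect_def effect_plot_def of_bool_def by simp

lemma A_carrier: "A_mat t b k d \<in> carrier_mat (b * k) (3 * t)"
  unfolding A_mat_def by (rule carrier_matI) (simp_all add: T_mat_def L_mat_def R_mat_def dim_row_hcat dim_col_hcat)

lemma A_index:
  assumes r: "r < b * k" and q: "q < 3 * t"
  shows "A_mat t b k d $$ (r, q) = plot_effect (q div t) (q mod t) r"
proof -
  have A: "A_mat t b k d $$ (r, q) = (if q < t then T_mat t b k d $$ (r, q) else
      if q - t < t then L_mat t b k d $$ (r, q - t) else R_mat t b k d $$ (r, q - t - t))"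
    unfolding A_mat_def using r q by (simp add: hcat_index T_mat_def L_mat_def R_mat_def dim_row_hcat dim_col_hcat)
  consider (T) "q < t" | (L) "t \<le> q" "q < 2 * t" | (R) "2 * t \<le> q" by linarith
  then show ?thesis
  proof cases
    case T
    then show ?thesis using A r by (simp add: T_mat_index)
  next
    case L
    then have "q div t = 1" "q mod t = q - t" "q - t < t"
      using le_div_geq[of t q] le_mod_geq[of t q] t_pos by auto
    then show ?thesis using A r L by (simp add: L_mat_index)
  next
    case R
    then have "q div t = 2" "q mod t = q - t - t" "q - t - t < t" "\<not> q - t < t"
      using le_div_geq[of t q] le_mod_geq[of t q] le_div_geq[of t "q - t"] le_mod_geq[of t "q - t"] t_pos q
      by (auto simp: numeral_2_eq_2)
    then show ?thesis using A r R by (simp add: R_mat_index)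
  qed
qed

lemma K_carrier: "K_mat t \<in> carrier_mat (3 * t) t"
  unfolding K_mat_def by simp

lemma K_index: "s < 3 * t \<Longrightarrow> a < t \<Longrightarrow> K_mat t $$ (s, a) = of_bool (s mod t = a)"
  unfolding K_mat_def of_bool_def by simp

lemma gram_K: "transpose_mat (K_mat t) * K_mat t = 3 \<cdot>\<^sub>m 1\<^sub>m t"
proof (rule eq_matI)
  fix a c assume "a < dim_row (3 \<cdot>\<^sub>m 1\<^sub>m t :: real mat)" "c < dim_col (3 \<cdot>\<^sub>m 1\<^sub>m t :: real mat)"
  then have a: "a < t" and c: "c < t" by auto
  have "(transpose_mat (K_mat t) * K_mat t) $$ (a, c) =
      (\<Sum>s<3 * t. of_bool (s mod t = a) * of_bool (s mod t = c))"
    using a c K_carrier by (simp add: scalar_prod_def K_index lessThan_atLeast0)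
  also have "\<dots> = (\<Sum>u<3::nat. \<Sum>v<t. of_bool (v = a) * of_bool (v = c))"
    unfolding sum_lessThan_3t by simp
  also have "\<dots> = 3 * of_bool (a = c)"
    using a by (simp add: sum_delta_of_bool')
  finally show "(transpose_mat (K_mat t) * K_mat t) $$ (a, c) = (3 \<cdot>\<^sub>m 1\<^sub>m t) $$ (a, c)"
    using a c by (simp add: of_bool_def)
qed (use K_carrier in auto)

lemma mp_inverse_gram_K: "mp_inverse (transpose_mat (K_mat t) * K_mat t) = (1 / 3) \<cdot>\<^sub>m 1\<^sub>m t"
  unfolding gram_K
  by (rule mp_inverse_eqI[of _ t t])
    (auto simp: penrose_conditions_def mult_smult_distrib[of _ t t _ t] mult_smult_assoc_mat[of _ t t _ t])

abbreviation X1 :: "real mat" where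
  "X1 \<equiv> A_mat t b k d * K_mat t * mp_inverse (transpose_mat (K_mat t) * K_mat t)"

lemma AK_carrier: "A_mat t b k d * K_mat t \<in> carrier_mat (b * k) t"
  using A_carrier K_carrier by auto

lemma X1_carrier: "X1 \<in> carrier_mat (b * k) t"
  using AK_carrier unfolding mp_inverse_gram_K by auto

lemma X1_index:
  assumes r: "r < b * k" and a: "a < t"
  shows "X1 $$ (r, a) = (\<Sum>u<3. 1 / 3 * plot_effect u a r)"
proof -
  have "X1 = (1 / 3) \<cdot>\<^sub>m (A_mat t b k d * K_mat t)"
    unfolding mp_inverse_gram_K
    using mult_smult_distrib[OF AK_carrier one_carrier_mat, of "1 / 3"] right_mult_one_mat[OF AK_carrier]
    by simp
  then have "X1 $$ (r, a) = 1 / 3 * (A_mat t b k d * K_mat t) $$ (r, a)"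
    using carrier_matD[OF AK_carrier] r a by simp
  also have "(A_mat t b k d * K_mat t) $$ (r, a) =
      (\<Sum>s<3 * t. plot_effect (s div t) (s mod t) r * of_bool (s mod t = a))"
    using r a A_carrier K_carrier by (simp add: scalar_prod_def K_index A_index lessThan_atLeast0)
  also have "\<dots> = (\<Sum>u<3. \<Sum>v<t. of_bool (v = a) * plot_effect u v r)"
    unfolding sum_lessThan_3t by (simp add: mult.commute)
  also have "\<dots> = (\<Sum>u<3. plot_effect u a r)"
    using a by (simp add: sum_delta_of_bool')
  finally show ?thesis by (simp add: sum_distrib_left)
qed

lemma M_carrier: "M_mat t \<in> carrier_mat (3 * t) (3 * t)"
  unfolding M_mat_def using K_carrier by auto

lemma M_index:
  assumes p: "p < 3 * t" and q: "q < 3 * t"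
  shows "M_mat t $$ (p, q) = of_bool (p = q) - 1 / 3 * of_bool (p mod t = q mod t)"
proof -
  have "(K_mat t * transpose_mat (K_mat t)) $$ (p, q) =
      (\<Sum>s<t. of_bool (p mod t = s) * of_bool (q mod t = s))"
    using p q K_carrier by (simp add: scalar_prod_def K_index lessThan_atLeast0)
  also have "\<dots> = of_bool (q mod t = p mod t)"
    using t_pos by (simp add: sum_delta_of_bool)
  also have "\<dots> = of_bool (p mod t = q mod t)"
    by (rule arg_cong[where f = of_bool]) auto
  finally have KK: "(K_mat t * transpose_mat (K_mat t)) $$ (p, q) = of_bool (p mod t = q mod t)" .
  have "K_mat t * ((1 / 3) \<cdot>\<^sub>m 1\<^sub>m t) * transpose_mat (K_mat t) =
      (1 / 3) \<cdot>\<^sub>m (K_mat t * transpose_mat (K_mat t))"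
    using K_carrier
    by (simp add: mult_smult_distrib[of _ "3 * t" t _ t] mult_smult_assoc_mat[of _ "3 * t" t _ "3 * t"])
  then show ?thesis
    unfolding M_mat_def mp_inverse_gram_K using p q KK K_carrier by (simp add: of_bool_def)
qed

lemma AM_carrier: "A_mat t b k d * M_mat t \<in> carrier_mat (b * k) (3 * t)"
  using A_carrier M_carrier by auto

lemma AM_index:
  assumes r: "r < b * k" and q: "q < 3 * t"
  shows "(A_mat t b k d * M_mat t) $$ (r, q) =
    (\<Sum>u<3. centering 3 (q div t) u * plot_effect u (q mod t) r)"
proof -
  have "(A_mat t b k d * M_mat t) $$ (r, q) = (\<Sum>s<3 * t. plot_effect (s div t) (s mod t) r *
      (of_bool (s = q) - 1 / 3 * of_bool (s mod t = q mod t)))"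
    using r q A_carrier M_carrier by (simp add: scalar_prod_def M_index A_index lessThan_atLeast0)
  also have "\<dots> = (\<Sum>u<3. \<Sum>v<t. plot_effect u v r *
      (of_bool (u * t + v = q) - 1 / 3 * of_bool (v = q mod t)))"
    unfolding sum_lessThan_3t by simp
  also have "\<dots> = (\<Sum>u<3. \<Sum>v<t. of_bool (q mod t = v) * (centering 3 (q div t) u * plot_effect u v r))"
    by (intro sum.cong refl) (auto simp: mult_add_eq_iff_div_mod centering_def of_bool_def)
  also have "\<dots> = (\<Sum>u<3. centering 3 (q div t) u * plot_effect u (q mod t) r)"
    using t_pos by (simp add: sum_delta_of_bool)
  finally show ?thesis .
qed

lemma B_carrier: "B_mat b k \<in> carrier_mat (b * k) b"
  unfolding B_mat_def by simp

lemma B_index: "r < b * k \<Longrightarrow> i < b \<Longrightarrow> B_mat b k $$ (r, i) = of_bool (r div k = i)"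
  unfolding B_mat_def of_bool_def by simp

abbreviation X2 :: "real mat" where
  "X2 \<equiv> hcat (A_mat t b k d * M_mat t) (B_mat b k)"

lemma X2_carrier: "X2 \<in> carrier_mat (b * k) (3 * t + b)"
  using AM_carrier B_carrier by (intro carrier_matI) (auto simp: dim_row_hcat dim_col_hcat)

lemma X2_index:
  assumes r: "r < b * k" and q: "q < 3 * t + b"
  shows "X2 $$ (r, q) = (if q < 3 * t then (\<Sum>u<3. centering 3 (q div t) u * plot_effect u (q mod t) r)
    else of_bool (r div k = q - 3 * t))"
proof (cases "q < 3 * t")
  case True
  have "X2 $$ (r, q) = (A_mat t b k d * M_mat t) $$ (r, q)"
    using r q True carrier_matD[OF AM_carrier] carrier_matD[OF B_carrier] by (simp add: hcat_index)
  also have "\<dots> = (\<Sum>u<3. centering 3 (q div t) u * plot_effect u (q mod t) r)"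
    by (rule AM_index[OF r True])
  finally show ?thesis using True by simp
next
  case False
  then show ?thesis
    using r q carrier_matD[OF AM_carrier] carrier_matD[OF B_carrier] by (simp add: hcat_index B_index)
qed

definition kron_centering :: "nat \<Rightarrow> nat \<Rightarrow> real" where
  "kron_centering p q = centering 3 (p div t) (q div t) * centering t (p mod t) (q mod t)"

text \<open>In the paper's notation, centering_block_mat \<open>\<alpha> \<beta>\<close> is \<open>\<alpha> (Q\<^sub>3 \<otimes> Q\<^sub>t) \<oplus> \<beta> I\<^sub>b\<close>: the Gram
  matrix of X2 and its Moore-Penrose inverse both have this shape.\<close>

definition centering_block_mat :: "real \<Rightarrow> real \<Rightarrow> real mat" where
  "centering_block_mat \<alpha> \<beta> = mat (3 * t + b) (3 * t + b) (\<lambda>(p, q).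
     if p < 3 * t \<and> q < 3 * t then \<alpha> * kron_centering p q
     else if 3 * t \<le> p \<and> p = q then \<beta> else 0)"

lemma centering_block_mat_carrier: "centering_block_mat \<alpha> \<beta> \<in> carrier_mat (3 * t + b) (3 * t + b)"
  unfolding centering_block_mat_def by simp

lemma centering_block_mat_index:
  "p < 3 * t + b \<Longrightarrow> q < 3 * t + b \<Longrightarrow> centering_block_mat \<alpha> \<beta> $$ (p, q) =
    (if p < 3 * t \<and> q < 3 * t then \<alpha> * kron_centering p q else if 3 * t \<le> p \<and> p = q then \<beta> else 0)"
  unfolding centering_block_mat_def by simp

lemma kron_centering_idem:
  assumes p: "p < 3 * t" and q: "q < 3 * t"
  shows "(\<Sum>s<3 * t. kron_centering p s * kron_centering s q) = kron_centering p q"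
proof -
  have "(\<Sum>s<3 * t. kron_centering p s * kron_centering s q) =
      (\<Sum>u<3. \<Sum>v<t. (centering 3 (p div t) u * centering 3 u (q div t)) *
        (centering t (p mod t) v * centering t v (q mod t)))"
    unfolding sum_lessThan_3t kron_centering_def using t_pos by (intro sum.cong refl) (simp add: algebra_simps)
  also have "\<dots> = (\<Sum>u<3. centering 3 (p div t) u * centering 3 u (q div t)) *
      (\<Sum>v<t. centering t (p mod t) v * centering t v (q mod t))"
    by (simp add: sum_product)
  also have "\<dots> = kron_centering p q"
    using index_div_less_3[OF p] index_div_less_3[OF q] t_pos
    unfolding kron_centering_def by (simp add: centering_idem)
  finally show ?thesis .
qed

lemma sum_centering_block_mat_effect:
  assumes p: "p < 3 * t + b" and q: "q < 3 * t + b"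
  shows "(\<Sum>s<3 * t. centering_block_mat \<alpha> \<beta> $$ (p, s) * centering_block_mat \<gamma> \<delta> $$ (s, q)) =
    (if p < 3 * t \<and> q < 3 * t then \<alpha> * \<gamma> * kron_centering p q else 0)"
proof (cases "p < 3 * t \<and> q < 3 * t")
  case True
  then have "(\<Sum>s<3 * t. centering_block_mat \<alpha> \<beta> $$ (p, s) * centering_block_mat \<gamma> \<delta> $$ (s, q)) =
      (\<Sum>s<3 * t. \<alpha> * \<gamma> * (kron_centering p s * kron_centering s q))"
    by (intro sum.cong refl) (simp add: centering_block_mat_index)
  also have "\<dots> = \<alpha> * \<gamma> * kron_centering p q"
    using kron_centering_idem True by (simp flip: sum_distrib_left)
  finally show ?thesis using True by simp
next
  case False
  then have "(\<Sum>s<3 * t. centering_block_mat \<alpha> \<beta> $$ (p, s) * centering_block_mat \<gamma> \<delta> $$ (s, q)) = 0"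
    using p q by (intro sum.neutral ballI) (auto simp: centering_block_mat_index)
  then show ?thesis using False by auto
qed

lemma sum_centering_block_mat_block:
  assumes p: "p < 3 * t + b" and q: "q < 3 * t + b"
  shows "(\<Sum>s<b. centering_block_mat \<alpha> \<beta> $$ (p, 3 * t + s) * centering_block_mat \<gamma> \<delta> $$ (3 * t + s, q)) =
    (if 3 * t \<le> p \<and> p = q then \<beta> * \<delta> else 0)"
proof (cases "3 * t \<le> p")
  case True
  have "(\<Sum>s<b. centering_block_mat \<alpha> \<beta> $$ (p, 3 * t + s) * centering_block_mat \<gamma> \<delta> $$ (3 * t + s, q)) =
      (\<Sum>s<b. if p - 3 * t = s then (if p = q then \<beta> * \<delta> else 0) else 0)"
    using True p q by (intro sum.cong refl) (auto simp: centering_block_mat_index)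
  also have "\<dots> = (if p = q then \<beta> * \<delta> else 0)"
  proof -
    have "p - 3 * t < b" using p True by arith
    then show ?thesis by simp
  qed
  finally show ?thesis using True by simp
next
  case False
  then show ?thesis using p q by (simp add: centering_block_mat_index)
qed

lemma centering_block_mat_mult:
  "centering_block_mat \<alpha> \<beta> * centering_block_mat \<gamma> \<delta> = centering_block_mat (\<alpha> * \<gamma>) (\<beta> * \<delta>)"
proof (rule eq_matI)
  fix p q
  assume "p < dim_row (centering_block_mat (\<alpha> * \<gamma>) (\<beta> * \<delta>))"
    and "q < dim_col (centering_block_mat (\<alpha> * \<gamma>) (\<beta> * \<delta>))"
  then have p: "p < 3 * t + b" and q: "q < 3 * t + b" unfolding centering_block_mat_def by auto
  let ?D = "centering_block_mat \<alpha> \<beta>" and ?D' = "centering_block_mat \<gamma> \<delta>"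
  have "(?D * ?D') $$ (p, q) = (\<Sum>s<3 * t + b. ?D $$ (p, s) * ?D' $$ (s, q))"
    using p q centering_block_mat_carrier[of \<alpha> \<beta>] centering_block_mat_carrier[of \<gamma> \<delta>]
    by (simp add: scalar_prod_def lessThan_atLeast0)
  also have "\<dots> = (\<Sum>s<3 * t. ?D $$ (p, s) * ?D' $$ (s, q)) +
      (\<Sum>s<b. ?D $$ (p, 3 * t + s) * ?D' $$ (3 * t + s, q))"
    by (rule sum_lessThan_add)
  also have "\<dots> = centering_block_mat (\<alpha> * \<gamma>) (\<beta> * \<delta>) $$ (p, q)"
    unfolding sum_centering_block_mat_effect[OF p q] sum_centering_block_mat_block[OF p q]
    using p q by (simp add: centering_block_mat_index)
  finally show "(?D * ?D') $$ (p, q) = centering_block_mat (\<alpha> * \<gamma>) (\<beta> * \<delta>) $$ (p, q)" .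
qed (auto simp: centering_block_mat_def)

lemma centering_block_mat_transpose: "transpose_mat (centering_block_mat \<alpha> \<beta>) = centering_block_mat \<alpha> \<beta>"
  by (rule eq_matI) (auto simp: centering_block_mat_def kron_centering_def centering_sym)

lemma sum_effect_gram:
  "(\<Sum>u<3. \<Sum>v<3. \<alpha> u * \<beta> v * effect_gram u v a c) =
    (if a = c then replication * (\<Sum>u<3. \<alpha> u * \<beta> u)
     else real l * ((\<Sum>u<3. \<alpha> u) * (\<Sum>v<3. \<beta> v) - (\<Sum>u<3. \<alpha> u * \<beta> u)))"
  by (cases "a = c") (simp_all add: sum_lessThan_3 effect_gram_def algebra_simps)

lemma effect_gram_centred:
  assumes "w1 < 3" "w2 < 3"
  shows "(\<Sum>u<3. \<Sum>v<3. centering 3 w1 u * centering 3 w2 v * effect_gram u v a c) =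
    real l * real t * (centering 3 w1 w2 * centering t a c)"
proof -
  have diag: "(\<Sum>u<3. centering 3 w1 u * centering 3 w2 u) = centering 3 w1 w2"
    using centering_idem[OF assms] by (simp add: centering_sym[of 3 w2])
  show ?thesis
    unfolding sum_effect_gram diag sum_centering[OF assms(1)] sum_centering[OF assms(2)]
    using t_pos by (simp add: replication_def centering_def field_simps)
qed

lemma effect_gram_centred_average:
  assumes "w < 3"
  shows "(\<Sum>u<3. \<Sum>v<3. centering 3 w u * (1 / 3) * effect_gram u v a c) = 0"
  unfolding sum_effect_gram using sum_centering[OF assms] by (simp flip: sum_divide_distrib)

lemma effect_gram_average:
  "(\<Sum>u<3. \<Sum>v<3. 1 / 3 * (1 / 3) * effect_gram u v a c) =
    (if a = c then replication / 3 else 2 * real l / 3)"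
  unfolding sum_effect_gram by simp

lemma gram_X2_index:
  "p < 3 * t + b \<Longrightarrow> q < 3 * t + b \<Longrightarrow>
   (transpose_mat X2 * X2) $$ (p, q) = (\<Sum>r<b * k. X2 $$ (r, p) * X2 $$ (r, q))"
  using X2_carrier by (simp add: scalar_prod_def lessThan_atLeast0)

lemma sum_X2_effect_mult_effect:
  assumes p: "p < 3 * t" and q: "q < 3 * t"
  shows "(\<Sum>r<b * k. X2 $$ (r, p) * X2 $$ (r, q)) = real l * real t * kron_centering p q"
proof -
  have "(\<Sum>r<b * k. X2 $$ (r, p) * X2 $$ (r, q)) =
      (\<Sum>r<b * k. (\<Sum>u<3. centering 3 (p div t) u * plot_effect u (p mod t) r) *
        (\<Sum>v<3. centering 3 (q div t) v * plot_effect v (q mod t) r))"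
    using p q by (intro sum.cong refl) (simp add: X2_index)
  also have "\<dots> = (\<Sum>u<3. \<Sum>v<3. centering 3 (p div t) u * centering 3 (q div t) v *
      effect_gram u v (p mod t) (q mod t))"
    using t_pos by (intro sum_effect_comb_mult_effect_comb) simp_all
  also have "\<dots> = real l * real t * kron_centering p q"
    using index_div_less_3[OF p] index_div_less_3[OF q]
    by (simp add: effect_gram_centred kron_centering_def)
  finally show ?thesis .
qed

lemma sum_X2_effect_mult_block:
  assumes p: "p < 3 * t" and q: "3 * t \<le> q" "q < 3 * t + b"
  shows "(\<Sum>r<b * k. X2 $$ (r, p) * X2 $$ (r, q)) = 0"
proof -
  have "(\<Sum>r<b * k. X2 $$ (r, p) * X2 $$ (r, q)) =
      (\<Sum>r<b * k. (\<Sum>u<3. centering 3 (p div t) u * plot_effect u (p mod t) r) *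
        of_bool (r div k = q - 3 * t))"
    using p q by (intro sum.cong refl) (simp add: X2_index)
  also have "\<dots> = (\<Sum>u<3. centering 3 (p div t) u) *
      (\<Sum>i<b. incidence (p mod t) i * of_bool (i = q - 3 * t))"
    by (rule sum_effect_comb_mult_block[where F = "\<lambda>i. of_bool (i = q - 3 * t)"])
  also have "\<dots> = 0"
    using sum_centering[OF index_div_less_3[OF p]] by simp
  finally show ?thesis .
qed

lemma sum_X2_block_mult_block:
  assumes p: "3 * t \<le> p" "p < 3 * t + b" and q: "3 * t \<le> q" "q < 3 * t + b"
  shows "(\<Sum>r<b * k. X2 $$ (r, p) * X2 $$ (r, q)) = real k * of_bool (p = q)"
proof -
  have "(\<Sum>r<b * k. X2 $$ (r, p) * X2 $$ (r, q)) =
      (\<Sum>r<b * k. of_bool (r div k = p - 3 * t) * of_bool (r div k = q - 3 * t))"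
    using p q by (intro sum.cong refl) (simp add: X2_index)
  also have "\<dots> = real k * (\<Sum>i<b. of_bool (i = p - 3 * t) * of_bool (i = q - 3 * t))"
    by (rule sum_block[where F = "\<lambda>i. of_bool (i = p - 3 * t) * of_bool (i = q - 3 * t)"])
  also have "\<dots> = real k * of_bool (p - 3 * t = q - 3 * t)"
    using p by (simp add: sum_delta_of_bool')
  also have "p - 3 * t = q - 3 * t \<longleftrightarrow> p = q"
    using p q by arith
  finally show ?thesis .
qed

lemma gram_X2: "transpose_mat X2 * X2 = centering_block_mat (real l * real t) (real k)"
proof (rule eq_matI)
  fix p q
  assume "p < dim_row (centering_block_mat (real l * real t) (real k))"
    and "q < dim_col (centering_block_mat (real l * real t) (real k))"
  then have p: "p < 3 * t + b" and q: "q < 3 * t + b" unfolding centering_block_mat_def by auto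
  have "(transpose_mat X2 * X2) $$ (p, q) = (\<Sum>r<b * k. X2 $$ (r, p) * X2 $$ (r, q))"
    by (rule gram_X2_index[OF p q])
  also have "\<dots> = centering_block_mat (real l * real t) (real k) $$ (p, q)"
  proof -
    consider "p < 3 * t" "q < 3 * t" | "p < 3 * t" "3 * t \<le> q" | "3 * t \<le> p" "q < 3 * t"
      | "3 * t \<le> p" "3 * t \<le> q"
      by linarith
    then show ?thesis
    proof cases
      case 1
      then show ?thesis by (simp add: sum_X2_effect_mult_effect centering_block_mat_index p q)
    next
      case 2
      then show ?thesis by (simp add: sum_X2_effect_mult_block centering_block_mat_index p q)
    next
      case 3
      then show ?thesis
        using sum_X2_effect_mult_block[of q p] p q by (simp add: centering_block_mat_index mult.commute)
    next
      case 4
      then show ?thesis by (simp add: sum_X2_block_mult_block centering_block_mat_index p q of_bool_def)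
    qed
  qed
  finally show "(transpose_mat X2 * X2) $$ (p, q) = centering_block_mat (real l * real t) (real k) $$ (p, q)" .
qed (use X2_carrier in \<open>auto simp: centering_block_mat_def\<close>)

lemma penrose_gram_X2:
  "penrose_conditions (transpose_mat X2 * X2) (centering_block_mat (1 / (real l * real t)) (1 / real k))"
  unfolding gram_X2 penrose_conditions_def centering_block_mat_mult centering_block_mat_transpose
  using l_pos t_pos k_pos by simp

section \<open>The information matrix\<close>

text \<open>X2 * block_coeff_mat is \<open>B N' / k\<close>, the component of X1 in the column space of X2.\<close>

definition block_coeff_mat :: "real mat" where
  "block_coeff_mat = mat (3 * t + b) t (\<lambda>(q, a). if q < 3 * t then 0 else incidence a (q - 3 * t) / real k)"

abbreviation Y :: "real mat" where
  "Y \<equiv> X2 * block_coeff_mat"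

abbreviation E :: "real mat" where
  "E \<equiv> X1 - Y"

lemma block_coeff_mat_carrier: "block_coeff_mat \<in> carrier_mat (3 * t + b) t"
  unfolding block_coeff_mat_def by simp

lemma Y_carrier: "Y \<in> carrier_mat (b * k) t"
  using X2_carrier block_coeff_mat_carrier by auto

lemma E_carrier: "E \<in> carrier_mat (b * k) t"
  using Y_carrier by (rule minus_carrier_mat)

lemma Y_index:
  assumes r: "r < b * k" and a: "a < t"
  shows "Y $$ (r, a) = incidence a (r div k) / real k"
proof -
  have "Y $$ (r, a) = (\<Sum>q<3 * t + b. X2 $$ (r, q) * block_coeff_mat $$ (q, a))"
    using r a X2_carrier block_coeff_mat_carrier by (simp add: scalar_prod_def lessThan_atLeast0)
  also have "\<dots> = (\<Sum>q<3 * t. X2 $$ (r, q) * block_coeff_mat $$ (q, a)) +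
      (\<Sum>s<b. X2 $$ (r, 3 * t + s) * block_coeff_mat $$ (3 * t + s, a))"
    by (rule sum_lessThan_add)
  also have "(\<Sum>q<3 * t. X2 $$ (r, q) * block_coeff_mat $$ (q, a)) = 0"
    using a by (intro sum.neutral ballI) (simp add: block_coeff_mat_def)
  also have "(\<Sum>s<b. X2 $$ (r, 3 * t + s) * block_coeff_mat $$ (3 * t + s, a)) =
      (\<Sum>s<b. of_bool (r div k = s) * (incidence a s / real k))"
    using r a by (intro sum.cong refl) (simp add: X2_index block_coeff_mat_def)
  also have "\<dots> = incidence a (r div k) / real k"
    using block_less[OF r] by (subst sum_delta_of_bool) auto
  finally show ?thesis by simp
qed

lemma E_index: "r < b * k \<Longrightarrow> a < t \<Longrightarrow> E $$ (r, a) = X1 $$ (r, a) - Y $$ (r, a)"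
  using carrier_matD[OF Y_carrier] by simp

lemma sum_X2_mult_X1:
  assumes p: "p < 3 * t + b" and a: "a < t"
  shows "(\<Sum>r<b * k. X2 $$ (r, p) * X1 $$ (r, a)) = (if p < 3 * t then 0 else incidence a (p - 3 * t))"
proof (cases "p < 3 * t")
  case True
  have "(\<Sum>r<b * k. X2 $$ (r, p) * X1 $$ (r, a)) =
      (\<Sum>r<b * k. (\<Sum>u<3. centering 3 (p div t) u * plot_effect u (p mod t) r) *
        (\<Sum>v<3. 1 / 3 * plot_effect v a r))"
    using p a True by (intro sum.cong refl) (simp add: X2_index X1_index)
  also have "\<dots> = (\<Sum>u<3. \<Sum>v<3. centering 3 (p div t) u * (1 / 3) * effect_gram u v (p mod t) a)"
    using a t_pos by (intro sum_effect_comb_mult_effect_comb) simp_all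
  also have "\<dots> = 0"
    by (rule effect_gram_centred_average[OF index_div_less_3[OF True]])
  finally show ?thesis using True by simp
next
  case False
  have "(\<Sum>r<b * k. X2 $$ (r, p) * X1 $$ (r, a)) =
      (\<Sum>r<b * k. (\<Sum>v<3. 1 / 3 * plot_effect v a r) * of_bool (r div k = p - 3 * t))"
    using p a False by (intro sum.cong refl) (simp add: X2_index X1_index mult.commute)
  also have "\<dots> = (\<Sum>v<3::nat. 1 / 3 :: real) * (\<Sum>i<b. incidence a i * of_bool (i = p - 3 * t))"
    by (rule sum_effect_comb_mult_block[where F = "\<lambda>i. of_bool (i = p - 3 * t)"])
  also have "\<dots> = incidence a (p - 3 * t)"
    using p False by (simp add: sum_mult_delta_of_bool)
  finally show ?thesis using False by simp
qed

lemma sum_X2_mult_Y: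
  assumes p: "p < 3 * t + b" and a: "a < t"
  shows "(\<Sum>r<b * k. X2 $$ (r, p) * Y $$ (r, a)) = (if p < 3 * t then 0 else incidence a (p - 3 * t))"
proof (cases "p < 3 * t")
  case True
  have "(\<Sum>r<b * k. X2 $$ (r, p) * Y $$ (r, a)) =
      (\<Sum>r<b * k. (\<Sum>u<3. centering 3 (p div t) u * plot_effect u (p mod t) r) *
        (incidence a (r div k) / real k))"
    using p a True by (intro sum.cong refl) (simp add: X2_index Y_index)
  also have "\<dots> = (\<Sum>u<3. centering 3 (p div t) u) * (\<Sum>i<b. incidence (p mod t) i * (incidence a i / real k))"
    by (rule sum_effect_comb_mult_block[where F = "\<lambda>i. incidence a i / real k"])
  also have "\<dots> = 0"
    using sum_centering[OF index_div_less_3[OF True]] by simp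
  finally show ?thesis using True by simp
next
  case False
  have "(\<Sum>r<b * k. X2 $$ (r, p) * Y $$ (r, a)) =
      (\<Sum>r<b * k. of_bool (r div k = p - 3 * t) * (incidence a (r div k) / real k))"
    using p a False by (intro sum.cong refl) (simp add: X2_index Y_index)
  also have "\<dots> = real k * (\<Sum>i<b. of_bool (i = p - 3 * t) * (incidence a i / real k))"
    by (rule sum_block[where F = "\<lambda>i. of_bool (i = p - 3 * t) * (incidence a i / real k)"])
  also have "\<dots> = real k * (incidence a (p - 3 * t) / real k)"
    using p False by (subst sum_delta_of_bool') auto
  also have "\<dots> = incidence a (p - 3 * t)"
    using k_pos by simp
  finally show ?thesis using False by simp
qed

lemma X2_orth_E: "transpose_mat X2 * E = 0\<^sub>m (3 * t + b) t"
proof (rule eq_matI)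
  fix p a assume "p < dim_row (0\<^sub>m (3 * t + b) t :: real mat)" "a < dim_col (0\<^sub>m (3 * t + b) t :: real mat)"
  then have p: "p < 3 * t + b" and a: "a < t" by auto
  have "(transpose_mat X2 * E) $$ (p, a) = (\<Sum>r\<in>{0..<b * k}. X2 $$ (r, p) * E $$ (r, a))"
    using p a carrier_matD[OF X2_carrier] carrier_matD[OF E_carrier] by (simp add: scalar_prod_def)
  also have "\<dots> = (\<Sum>r<b * k. X2 $$ (r, p) * X1 $$ (r, a)) - (\<Sum>r<b * k. X2 $$ (r, p) * Y $$ (r, a))"
    using a by (simp add: lessThan_atLeast0 E_index right_diff_distrib sum_subtractf)
  also have "\<dots> = 0"
    using sum_X2_mult_X1[OF p a] sum_X2_mult_Y[OF p a] by simp
  finally show "(transpose_mat X2 * E) $$ (p, a) = 0\<^sub>m (3 * t + b) t $$ (p, a)" using p a by simp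
qed (use X2_carrier E_carrier in auto)

lemma info_mat_eq_X1_E: "info_mat t b k d = transpose_mat X1 * E"
proof -
  have X1: "X1 = X2 * block_coeff_mat + E"
    by (rule eq_matI) (use carrier_matD[OF X1_carrier] carrier_matD[OF Y_carrier] in auto)
  have "info_mat t b k d = transpose_mat X1 * proj_perp X2 * X1"
    unfolding info_mat_def Let_def ..
  also have "\<dots> = transpose_mat X1 * (proj_perp X2 * X1)"
    using X1_carrier proj_perp_carrier[OF X2_carrier] by (intro assoc_mult_mat[of _ t "b * k" _ "b * k" _ t]) auto
  also have "proj_perp X2 * X1 = E"
    using proj_perp_mult_orth_decomp[OF X2_carrier centering_block_mat_carrier penrose_gram_X2
        block_coeff_mat_carrier E_carrier X2_orth_E] X1 by simp
  finally show ?thesis .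
qed

lemma sum_X1_mult_X1:
  assumes a: "a < t" and c: "c < t"
  shows "(\<Sum>r<b * k. X1 $$ (r, a) * X1 $$ (r, c)) = (if a = c then replication / 3 else 2 * real l / 3)"
proof -
  have "(\<Sum>r<b * k. X1 $$ (r, a) * X1 $$ (r, c)) =
      (\<Sum>r<b * k. (\<Sum>u<3. 1 / 3 * plot_effect u a r) * (\<Sum>v<3. 1 / 3 * plot_effect v c r))"
    using a c by (intro sum.cong refl) (simp add: X1_index)
  also have "\<dots> = (\<Sum>u<3. \<Sum>v<3. 1 / 3 * (1 / 3) * effect_gram u v a c)"
    using a c by (rule sum_effect_comb_mult_effect_comb)
  finally show ?thesis by (simp only: effect_gram_average)
qed

lemma sum_X1_mult_Y:
  assumes a: "a < t" and c: "c < t"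
  shows "(\<Sum>r<b * k. X1 $$ (r, a) * Y $$ (r, c)) =
    (if a = c then replication else real l * (real k - 1)) / real k"
proof -
  have "(\<Sum>r<b * k. X1 $$ (r, a) * Y $$ (r, c)) =
      (\<Sum>r<b * k. (\<Sum>u<3. 1 / 3 * plot_effect u a r) * (incidence c (r div k) / real k))"
    using a c by (intro sum.cong refl) (simp add: X1_index Y_index)
  also have "\<dots> = (\<Sum>u<3::nat. 1 / 3 :: real) * (\<Sum>i<b. incidence a i * (incidence c i / real k))"
    by (rule sum_effect_comb_mult_block[where F = "\<lambda>i. incidence c i / real k"])
  also have "\<dots> = (\<Sum>i<b. incidence a i * incidence c i) / real k"
    by (simp add: sum_divide_distrib)
  finally show ?thesis using sum_incidence_mult_incidence[OF a c] by simp
qed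

lemma information_coefficient:
  "(if a = c then replication / 3 else 2 * real l / 3) -
     (if a = c then replication else real l * (real k - 1)) / real k =
   real b * (real k - 3) / (3 * (real t - 1)) * centering t a c"
proof -
  have b: "real b = real l * (real t * (real t - 1)) / real k"
    using l_eq_real k_pos by (simp add: field_simps)
  show ?thesis
    unfolding b replication_def centering_def using t_gt_1 k_pos by (auto simp: field_simps)
qed

lemma info_mat_eq:
  "info_mat t b k d = (real b * (real k - 3) / (3 * (real t - 1))) \<cdot>\<^sub>m (1\<^sub>m t - (1 / real t) \<cdot>\<^sub>m J_mat t)"
  (is "_ = ?C")
proof (rule eq_matI)
  fix a c assume "a < dim_row ?C" "c < dim_col ?C"
  then have a: "a < t" and c: "c < t" by (auto simp: J_mat_def)
  have "info_mat t b k d $$ (a, c) = (\<Sum>r\<in>{0..<b * k}. X1 $$ (r, a) * E $$ (r, c))"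
    unfolding info_mat_eq_X1_E using a c carrier_matD[OF X1_carrier] carrier_matD[OF E_carrier]
    by (simp add: scalar_prod_def)
  also have "\<dots> = (\<Sum>r<b * k. X1 $$ (r, a) * X1 $$ (r, c)) - (\<Sum>r<b * k. X1 $$ (r, a) * Y $$ (r, c))"
    using c by (simp add: lessThan_atLeast0 E_index right_diff_distrib sum_subtractf)
  also have "\<dots> = real b * (real k - 3) / (3 * (real t - 1)) * centering t a c"
    unfolding sum_X1_mult_X1[OF a c] sum_X1_mult_Y[OF a c] by (rule information_coefficient)
  finally show "info_mat t b k d $$ (a, c) = ?C $$ (a, c)"
    using a c by (simp add: J_mat_def centering_def of_bool_def)
qed (use carrier_matD[OF X1_carrier] carrier_matD[OF E_carrier] in \<open>auto simp: info_mat_eq_X1_E J_mat_def\<close>)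

end

theorem lemma5:
  fixes t b k l :: nat and d :: "nat \<Rightarrow> nat \<Rightarrow> nat"
  assumes "0 < t" "0 < b" "0 < k" "4 \<le> k" "k \<le> t"
    and "l * (t * (t - 1)) = b * k"
    and "CNBD2 t b k l d"
  shows "info_mat t b k d =
    (real b * (real k - 3) / (3 * (real t - 1))) \<cdot>\<^sub>m (1\<^sub>m t - (1 / real t) \<cdot>\<^sub>m J_mat t)"
proof -
  interpret cnbd2_design t b k l d
    by unfold_locales (use assms in auto)
  show ?thesis by (rule info_mat_eq)
qed

end
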